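(* Consider the system of ordinary differential equations \[ \dot u=r_{1}u(1-u)-a_{12}uv-a_{13}uw,\qquad \dot v=r_{2}v(1-v)+a_{21}uv,\qquad \dot w=-\mu w+a_{31}uw, \] with all parameters $r_1,r_2,\mu,a_{12},a_{13},a_{21},a_{31}$ positive. Assume \[ r_{1}r_{2}a_{31}-r_{1}r_{2}\mu-a_{12}a_{31}r_{2}-a_{12}a_{21}\mu>0 . \] Then the positive equilibrium \[ E_{*}=(u_{*},v_{*},w_{*})=\left(\frac{\mu}{a_{31}},\;1+\frac{a_{21}\mu}{a_{31}r_{2}},\;\frac{r_{1}r_{2}a_{31}-r_{1}r_{2}\mu-a_{12}a_{31}r_{2}-a_{12}a_{21}\mu}{a_{13}a_{31}r_{2}}\right) \] exists and it is globally asymptotically stable, i.e. it is stable and every solution with $u(0),v(0),w(0)>0$ converges to $E_*$ as $t\to\infty$.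
   Context: $u,v,w$ denote population densities of three species; solutions are considered in the positive orthant. *)

theory Defs
  imports "HOL-Analysis.Analysis"
begin

definition is_solution ::
  "real \<Rightarrow> real \<Rightarrow> real \<Rightarrow> real \<Rightarrow> real \<Rightarrow> real \<Rightarrow> real \<Rightarrow>
   (real \<Rightarrow> real) \<Rightarrow> (real \<Rightarrow> real) \<Rightarrow> (real \<Rightarrow> real) \<Rightarrow> bool" where
  "is_solution r1 r2 mu a12 a13 a21 a31 u v w \<longleftrightarrow>
     (\<forall>t\<ge>0.
        (u has_real_derivative (r1 * u t * (1 - u t) - a12 * u t * v t - a13 * u t * w t))
          (at t within {0..}) \<and>
        (v has_real_derivative (r2 * v t * (1 - v t) + a21 * u t * v t))
          (at t within {0..}) \<and>
        (w has_real_derivative (- mu * w t + a31 * u t * w t))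
          (at t within {0..}))"

definition dist3 :: "real \<Rightarrow> real \<Rightarrow> real \<Rightarrow> real \<Rightarrow> real \<Rightarrow> real \<Rightarrow> real" where
  "dist3 x1 y1 z1 x2 y2 z2 = sqrt ((x1 - x2)^2 + (y1 - y2)^2 + (z1 - z2)^2)"

end

(*
  The Volterra function H c x = x - c - c ln (x / c) is nonnegative and vanishes only at x = c,
  so V = H us u + (a12 / a21) H vs v + (a13 / a31) H ws w measures how far a positive state is
  from the equilibrium (us, vs, ws). Along solutions the weights make all cross terms cancel:
  V' = - r1 (u - us)^2 - (a12 / a21) r2 (v - vs)^2 <= 0.
  Stability follows because small sublevel sets of V are small neighbourhoods of the equilibrium.
  For attractivity, V is bounded along a solution, hence so are the solution and its derivative;
  V converges and V' is uniformly continuous, so by Barbalat's lemma V' -> 0, i.e. u -> us and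
  v -> vs. Finally (ln u)' = - r1 (u - us) - a12 (v - vs) - a13 (w - ws), and Barbalat's lemma
  applied to ln u forces w -> ws.
*)

theory Submission
  imports Defs
begin

lemma has_real_derivative_within_atLeast_imp_at:
  assumes "(f has_real_derivative D) (at t within {a..})" "a < t"
  shows "(f has_real_derivative D) (at t)"
  using assms at_within_interior[of t "{a..}"] by (simp add: interior_real_atLeast)

lemma has_real_derivative_imp_continuous_on:
  assumes "\<And>t. t \<in> S \<Longrightarrow> (f has_real_derivative f' t) (at t within S)"
  shows "continuous_on S f"
  unfolding continuous_on_eq_continuous_within using assms DERIV_continuous by blast

lemma DERIV_nonpos_imp_antitone_atLeast:
  fixes f f' :: "real \<Rightarrow> real"
  assumes "\<And>t. a \<le> t \<Longrightarrow> (f has_real_derivative f' t) (at t within {a..})"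
    and "\<And>t. a \<le> t \<Longrightarrow> f' t \<le> 0"
    and "a \<le> s" "s \<le> t"
  shows "f t \<le> f s"
proof (rule DERIV_nonpos_imp_decreasing_open[OF \<open>s \<le> t\<close>])
  show "\<exists>y. (f has_real_derivative y) (at x) \<and> y \<le> 0" if "s < x" "x < t" for x
    using assms that has_real_derivative_within_atLeast_imp_at[of f "f' x" x a] by force
  have "continuous_on {a..} f"
    by (rule has_real_derivative_imp_continuous_on) (use assms(1) in auto)
  then show "continuous_on {s..t} f"
    by (rule continuous_on_subset) (use \<open>a \<le> s\<close> in auto)
qed

lemma bounded_DERIV_imp_lipschitz_on:
  fixes f f' :: "real \<Rightarrow> real"
  assumes "convex S" "\<And>t. t \<in> S \<Longrightarrow> (f has_real_derivative f' t) (at t within S)"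
    and "\<And>t. t \<in> S \<Longrightarrow> \<bar>f' t\<bar> \<le> B" "0 \<le> B"
  shows "B-lipschitz_on S f"
  using field_differentiable_bound[OF assms(1,2)] assms(3,4)
  by (intro lipschitz_onI) (auto simp: dist_real_def)

lemma lipschitz_on_power2:
  fixes f :: "'a::metric_space \<Rightarrow> real"
  assumes "L-lipschitz_on S f" "\<And>x. x \<in> S \<Longrightarrow> \<bar>f x\<bar> \<le> B" "0 \<le> B"
  shows "(2 * B * L)-lipschitz_on S (\<lambda>x. (f x)\<^sup>2)"
proof (rule lipschitz_onI)
  fix x y assume xy: "x \<in> S" "y \<in> S"
  have "\<bar>(f x)\<^sup>2 - (f y)\<^sup>2\<bar> = \<bar>f x + f y\<bar> * \<bar>f x - f y\<bar>"
    by (simp add: power2_eq_square abs_mult[symmetric] algebra_simps)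
  also have "\<dots> \<le> (2 * B) * (L * dist x y)"
    using assms(2)[OF xy(1)] assms(2)[OF xy(2)] lipschitz_onD[OF assms(1) xy]
    by (intro mult_mono) (auto simp: dist_real_def)
  finally show "dist ((f x)\<^sup>2) ((f y)\<^sup>2) \<le> 2 * B * L * dist x y"
    by (simp add: dist_real_def mult.assoc)
next
  show "0 \<le> 2 * B * L"
    using assms(3) lipschitz_on_nonneg[OF assms(1)] by simp
qed

lemma DERIV_proportional_imp_pos:
  fixes f g :: "real \<Rightarrow> real"
  assumes deriv: "\<And>t. 0 \<le> t \<Longrightarrow> (f has_real_derivative f t * g t) (at t within {0..})"
    and "continuous_on {0..} g" "0 < f 0" "0 \<le> t"
  shows "0 < f t"
proof (rule ccontr)
  assume "\<not> 0 < f t"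
  have cont_f: "continuous_on {0..} f"
    using deriv by (intro has_real_derivative_imp_continuous_on[where f' = "\<lambda>t. f t * g t"]) auto
  then obtain s where s: "0 \<le> s" "s \<le> t" "f s = 0"
    using IVT2'[of f t 0 0] continuous_on_subset[OF cont_f, of "{0..t}"] \<open>\<not> 0 < f t\<close> \<open>0 < f 0\<close> \<open>0 \<le> t\<close>
    by auto
  have "compact (g ` {0..s})"
    using continuous_on_subset[OF assms(2)] by (intro compact_continuous_image) auto
  then obtain G where G: "\<And>x. x \<in> {0..s} \<Longrightarrow> \<bar>g x\<bar> \<le> G"
    by (metis bounded_real compact_imp_bounded image_eqI)
  \<comment> \<open>As (f^2)' = 2 f^2 g >= -2 G f^2 on [0, s], q is nondecreasing there, so f cannot vanish at s.\<close>
  define q where "q x = (f x)\<^sup>2 * exp (2 * G * x)" for x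
  have "q 0 \<le> q s"
  proof (rule DERIV_nonneg_imp_increasing_open[OF \<open>0 \<le> s\<close>])
    fix x assume x: "0 < x" "x < s"
    have "(f has_real_derivative f x * g x) (at x)"
      using deriv[of x] x has_real_derivative_within_atLeast_imp_at by auto
    then have "(q has_real_derivative 2 * (f x)\<^sup>2 * exp (2 * G * x) * (g x + G)) (at x)"
      unfolding q_def by (auto intro!: derivative_eq_intros simp: algebra_simps power2_eq_square)
    moreover have "0 \<le> 2 * (f x)\<^sup>2 * exp (2 * G * x) * (g x + G)"
      using G[of x] x by (intro mult_nonneg_nonneg) auto
    ultimately show "\<exists>y. (q has_real_derivative y) (at x) \<and> 0 \<le> y" by blast
  next
    show "continuous_on {0..s} q"
      unfolding q_def using continuous_on_subset[OF cont_f, of "{0..s}"]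
      by (intro continuous_intros) auto
  qed
  then show False using \<open>0 < f 0\<close> \<open>f s = 0\<close> by (simp add: q_def)
qed

lemma antitone_atLeast_imp_tendsto_Inf:
  fixes f :: "real \<Rightarrow> real"
  assumes antitone: "\<And>s t. a \<le> s \<Longrightarrow> s \<le> t \<Longrightarrow> f t \<le> f s"
    and bdd: "\<And>t. a \<le> t \<Longrightarrow> b \<le> f t"
  shows "(f \<longlongrightarrow> Inf (f ` {a..})) at_top"
proof (rule decreasing_tendsto)
  have "bdd_below (f ` {a..})" by (rule bdd_belowI2[where m = b]) (use bdd in auto)
  then show "\<forall>\<^sub>F t in at_top. Inf (f ` {a..}) \<le> f t"
    by (auto simp: eventually_at_top_linorder intro!: exI[of _ a] cInf_lower)
  fix x assume "Inf (f ` {a..}) < x"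
  then obtain s where s: "a \<le> s" "f s < x"
    using cInf_lessD[of "f ` {a..}" x] by auto
  show "\<forall>\<^sub>F t in at_top. f t < x"
    using eventually_ge_at_top[of s] by eventually_elim (use antitone s in force)
qed

lemma Barbalat_lemma:
  fixes f p q :: "real \<Rightarrow> real"
  assumes lim: "(f \<longlongrightarrow> l) at_top"
    and deriv: "\<And>t. 0 < t \<Longrightarrow> (f has_real_derivative p t + q t) (at t)"
    and p: "(p \<longlongrightarrow> 0) at_top"
    and q: "uniformly_continuous_on {0..} q"
  shows "(q \<longlongrightarrow> 0) at_top"
proof (rule ccontr)
  assume "\<not> (q \<longlongrightarrow> 0) at_top"
  then obtain e where e: "0 < e" and often: "\<And>T. \<exists>t\<ge>T. e \<le> \<bar>q t\<bar>"
    unfolding tendsto_iff eventually_at_top_linorder by (force simp: not_less)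
  obtain d where d: "0 < d"
    and q_close: "\<And>s t. s \<in> {0..} \<Longrightarrow> t \<in> {0..} \<Longrightarrow> dist s t < d \<Longrightarrow> dist (q s) (q t) < e/2"
    using q e unfolding uniformly_continuous_on_def by (metis half_gt_zero)
  define \<tau> where "\<tau> = d/2"
  have \<tau>: "0 < \<tau>" "\<tau> < d" using d by (auto simp: \<tau>_def)
  have "filterlim (\<lambda>t. \<tau> + t) at_top at_top"
    by (rule filterlim_tendsto_add_at_top[OF tendsto_const filterlim_ident])
  then have "((\<lambda>t. f (\<tau> + t) - f t) \<longlongrightarrow> l - l) at_top"
    by (intro tendsto_diff filterlim_compose[OF lim] lim)
  then have "\<forall>\<^sub>F t in at_top. dist (f (\<tau> + t) - f t) (l - l) < \<tau> * e / 4"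
    using \<tau> e by (intro tendstoD) auto
  then have "\<forall>\<^sub>F t in at_top. \<bar>f (t + \<tau>) - f t\<bar> < \<tau> * e / 4"
    by (simp add: dist_real_def add.commute)
  moreover have "\<forall>\<^sub>F t in at_top. dist (p t) 0 < e / 4"
    using p e by (intro tendstoD) auto
  ultimately have "\<forall>\<^sub>F t in at_top. \<bar>f (t + \<tau>) - f t\<bar> < \<tau> * e / 4 \<and> \<bar>p t\<bar> < e / 4"
    by eventually_elim (simp add: dist_real_def)
  then obtain T where T: "\<And>t. T \<le> t \<Longrightarrow> \<bar>f (t + \<tau>) - f t\<bar> < \<tau> * e / 4 \<and> \<bar>p t\<bar> < e / 4"
    unfolding eventually_at_top_linorder by blast
  \<comment> \<open>At a late time with |q| >= e, uniform continuity keeps |q| > e/2 for a time tau,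
    so f moves by more than tau e/4, contradicting its convergence.\<close>
  obtain t where t: "max T 1 \<le> t" "e \<le> \<bar>q t\<bar>" using often by blast
  obtain \<xi> where \<xi>: "t < \<xi>" "\<xi> < t + \<tau>" "f (t + \<tau>) - f t = \<tau> * (p \<xi> + q \<xi>)"
    using MVT2[of t "t + \<tau>" f "\<lambda>s. p s + q s"] deriv t \<tau> by force
  have "dist (q \<xi>) (q t) < e/2" using q_close[of \<xi> t] \<xi> t \<tau> by (auto simp: dist_real_def)
  moreover have "\<bar>q t\<bar> - \<bar>q \<xi>\<bar> \<le> dist (q \<xi>) (q t)"
    by (metis abs_triangle_ineq2 dist_commute dist_real_def)
  ultimately have "e/2 < \<bar>q \<xi>\<bar>" using t by linarith
  moreover have "\<bar>p \<xi>\<bar> < e/4" using T[of \<xi>] \<xi> t by auto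
  moreover have "\<bar>q \<xi>\<bar> - \<bar>p \<xi>\<bar> \<le> \<bar>p \<xi> + q \<xi>\<bar>" by arith
  ultimately have "\<tau> * (e/4) < \<tau> * \<bar>p \<xi> + q \<xi>\<bar>"
    using \<tau> by (intro mult_strict_left_mono) auto
  moreover have "\<bar>f (t + \<tau>) - f t\<bar> < \<tau> * e / 4" using T[of t] t by auto
  ultimately show False using \<xi>(3) \<tau> by (simp add: abs_mult)
qed

lemma square_diff_tendsto_0_imp_tendsto:
  fixes f :: "'a \<Rightarrow> real"
  assumes "((\<lambda>x. (f x - l)\<^sup>2) \<longlongrightarrow> 0) F"
  shows "(f \<longlongrightarrow> l) F"
proof -
  have "((\<lambda>x. sqrt ((f x - l)\<^sup>2)) \<longlongrightarrow> sqrt 0) F"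
    by (rule tendsto_real_sqrt[OF assms])
  then show ?thesis by (simp add: tendsto_rabs_zero_iff LIM_zero_iff)
qed

lemma abs_linear_combination3_le:
  fixes a b c x y z R :: real
  assumes "\<bar>x\<bar> \<le> R" "\<bar>y\<bar> \<le> R" "\<bar>z\<bar> \<le> R"
  shows "\<bar>a * x + b * y + c * z\<bar> \<le> (\<bar>a\<bar> + \<bar>b\<bar> + \<bar>c\<bar>) * R"
proof -
  have "\<bar>a * x + b * y + c * z\<bar> \<le> \<bar>a\<bar> * \<bar>x\<bar> + \<bar>b\<bar> * \<bar>y\<bar> + \<bar>c\<bar> * \<bar>z\<bar>"
    using abs_triangle_ineq[of "a * x + b * y" "c * z"] abs_triangle_ineq[of "a * x" "b * y"]
    by (simp add: abs_mult)
  also have "\<dots> \<le> \<bar>a\<bar> * R + \<bar>b\<bar> * R + \<bar>c\<bar> * R"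
    using assms by (intro add_mono mult_left_mono) auto
  finally show ?thesis by (simp add: algebra_simps)
qed

section \<open>The Volterra function\<close>

definition volterra :: "real \<Rightarrow> real \<Rightarrow> real" where
  "volterra c x = x - c - c * ln (x / c)"

lemma volterra_nonneg:
  assumes "0 < c" "0 < x"
  shows "0 \<le> volterra c x"
proof -
  have "c * ln (x / c) \<le> c * (x / c - 1)"
    using assms by (intro mult_left_mono ln_le_minus_one) auto
  then show ?thesis using assms by (simp add: volterra_def algebra_simps)
qed

lemma volterra_le_square_div:
  assumes "0 < c" "0 < x"
  shows "volterra c x \<le> (x - c)\<^sup>2 / x"
proof -
  have "c * ln (c / x) \<le> c * (c / x - 1)"
    using assms by (intro mult_left_mono ln_le_minus_one) auto
  then have "volterra c x \<le> x - c + c * (c / x - 1)"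
    using assms by (simp add: volterra_def ln_div algebra_simps)
  also have "\<dots> = (x - c)\<^sup>2 / x"
    using assms by (simp add: field_simps power2_eq_square)
  finally show ?thesis .
qed

lemma sqrt_diff_square_le_volterra:
  assumes "0 < c" "0 < x"
  shows "(sqrt x - sqrt c)\<^sup>2 \<le> volterra c x"
proof -
  have "c * ln (sqrt x / sqrt c) \<le> c * (sqrt x / sqrt c - 1)"
    using assms by (intro mult_left_mono ln_le_minus_one) auto
  moreover have "ln (sqrt x / sqrt c) = ln (x / c) / 2"
    using assms by (simp add: ln_sqrt real_sqrt_divide[symmetric])
  moreover have "c * (sqrt x / sqrt c) = sqrt x * sqrt c"
    using assms real_div_sqrt[of c] by (simp add: field_simps)
  ultimately show ?thesis
    using assms by (simp add: volterra_def power2_eq_square algebra_simps)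
qed

lemma volterra_le_imp_abs_diff_le:
  assumes "0 < c" "0 < x" "0 \<le> k" "volterra c x \<le> k\<^sup>2"
  shows "\<bar>x - c\<bar> \<le> k * (k + 2 * sqrt c)"
proof -
  have "(sqrt x - sqrt c)\<^sup>2 \<le> k\<^sup>2"
    using sqrt_diff_square_le_volterra[OF assms(1,2)] assms(4) by linarith
  then have close: "\<bar>sqrt x - sqrt c\<bar> \<le> k"
    using assms(3) by (simp add: power2_le_iff_abs_le)
  have "x - c = (sqrt x - sqrt c) * (sqrt x + sqrt c)"
    using assms by (simp add: algebra_simps)
  then have "\<bar>x - c\<bar> = \<bar>sqrt x - sqrt c\<bar> * (sqrt x + sqrt c)"
    using assms by (simp add: abs_mult)
  also have "\<dots> \<le> k * (k + 2 * sqrt c)"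
    using close assms by (intro mult_mono) auto
  finally show ?thesis .
qed

lemma abs_diff_le_imp_volterra_le:
  assumes "0 < c" "\<bar>x - c\<bar> \<le> d" "d \<le> c / 2"
  shows "volterra c x \<le> 2 * d\<^sup>2 / c"
proof -
  have x: "c / 2 \<le> x" using assms by linarith
  have "volterra c x \<le> (x - c)\<^sup>2 / x"
    using assms x by (intro volterra_le_square_div) auto
  also have "\<dots> \<le> d\<^sup>2 / (c / 2)"
    using assms x by (intro frac_le power2_le_iff_abs_le[THEN iffD2]) auto
  finally show ?thesis by (simp add: field_simps)
qed

lemma has_real_derivative_volterra:
  assumes "(f has_real_derivative f') (at t within S)" "0 < c" "0 < f t"
  shows "((\<lambda>t. volterra c (f t)) has_real_derivative f' * (1 - c / f t)) (at t within S)"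
  unfolding volterra_def using assms
  by (auto intro!: derivative_eq_intros simp: field_simps)

section \<open>A Lyapunov function for a positive equilibrium\<close>

lemma abs_le_dist3:
  "\<bar>x - x'\<bar> \<le> dist3 x y z x' y' z'"
  "\<bar>y - y'\<bar> \<le> dist3 x y z x' y' z'"
  "\<bar>z - z'\<bar> \<le> dist3 x y z x' y' z'"
  unfolding dist3_def
  by (metis real_sqrt_abs real_sqrt_le_mono add_increasing2 add_increasing zero_le_power2 order_refl)+

lemma dist3_le_sum_abs:
  "dist3 x y z x' y' z' \<le> \<bar>x - x'\<bar> + \<bar>y - y'\<bar> + \<bar>z - z'\<bar>"
  unfolding dist3_def
proof (rule real_le_lsqrt)
  let ?a = "\<bar>x - x'\<bar>" and ?b = "\<bar>y - y'\<bar>" and ?c = "\<bar>z - z'\<bar>"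
  have "(?a + ?b + ?c)\<^sup>2 = ?a\<^sup>2 + ?b\<^sup>2 + ?c\<^sup>2 + 2 * (?a * ?b + ?a * ?c + ?b * ?c)"
    by (simp add: power2_eq_square algebra_simps)
  then show "(x - x')\<^sup>2 + (y - y')\<^sup>2 + (z - z')\<^sup>2 \<le> (?a + ?b + ?c)\<^sup>2"
    by simp
qed simp

locale positive_equilibrium =
  fixes r1 r2 mu a12 a13 a21 a31 us vs ws :: real
  assumes rates_pos: "0 < r1" "0 < r2" "0 < a12" "0 < a13" "0 < a21" "0 < a31"
    and equilibrium_pos: "0 < us" "0 < vs" "0 < ws"
    and equilibrium: "r1 * (1 - us) - a12 * vs - a13 * ws = 0" "r2 * (1 - vs) + a21 * us = 0"
      "a31 * us = mu"
begin

lemma equilibrium_of_system: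
  "r1 * us * (1 - us) - a12 * us * vs - a13 * us * ws = 0"
  "r2 * vs * (1 - vs) + a21 * us * vs = 0"
  "- mu * ws + a31 * us * ws = 0"
proof -
  have "r1 * us * (1 - us) - a12 * us * vs - a13 * us * ws = us * (r1 * (1 - us) - a12 * vs - a13 * ws)"
    "r2 * vs * (1 - vs) + a21 * us * vs = vs * (r2 * (1 - vs) + a21 * us)"
    "- mu * ws + a31 * us * ws = ws * (a31 * us - mu)"
    by (simp_all add: algebra_simps)
  then show "r1 * us * (1 - us) - a12 * us * vs - a13 * us * ws = 0"
    "r2 * vs * (1 - vs) + a21 * us * vs = 0"
    "- mu * ws + a31 * us * ws = 0"
    using equilibrium by simp_all
qed

definition lyapunov :: "real \<Rightarrow> real \<Rightarrow> real \<Rightarrow> real" where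
  "lyapunov x y z = volterra us x + a12 / a21 * volterra vs y + a13 / a31 * volterra ws z"

definition min_weight :: real where
  "min_weight = min 1 (min (a12 / a21) (a13 / a31))"

lemma min_weight_pos: "0 < min_weight"
  using rates_pos by (simp add: min_weight_def)

lemma lyapunov_terms_nonneg:
  assumes "0 < x" "0 < y" "0 < z"
  shows "0 \<le> volterra us x" "0 \<le> a12 / a21 * volterra vs y" "0 \<le> a13 / a31 * volterra ws z"
  using assms equilibrium_pos rates_pos by (simp_all add: volterra_nonneg)

lemma lyapunov_nonneg: "0 < x \<Longrightarrow> 0 < y \<Longrightarrow> 0 < z \<Longrightarrow> 0 \<le> lyapunov x y z"
  using lyapunov_terms_nonneg by (simp add: lyapunov_def)

lemma lyapunov_le_imp_dist3_le:
  assumes pos: "0 < x" "0 < y" "0 < z" and "0 \<le> k"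
    and small: "lyapunov x y z \<le> min_weight * k\<^sup>2"
  shows "dist3 x y z us vs ws \<le> k * (3 * k + 2 * (sqrt us + sqrt vs + sqrt ws))"
proof -
  have "min_weight * k\<^sup>2 \<le> 1 * k\<^sup>2" "min_weight * k\<^sup>2 \<le> a12 / a21 * k\<^sup>2"
    "min_weight * k\<^sup>2 \<le> a13 / a31 * k\<^sup>2"
    by (intro mult_right_mono; simp add: min_weight_def)+
  then have "volterra us x \<le> k\<^sup>2" "a12 / a21 * volterra vs y \<le> a12 / a21 * k\<^sup>2"
    "a13 / a31 * volterra ws z \<le> a13 / a31 * k\<^sup>2"
    using lyapunov_terms_nonneg[OF pos] small unfolding lyapunov_def by linarith+
  then have "volterra us x \<le> k\<^sup>2" "volterra vs y \<le> k\<^sup>2" "volterra ws z \<le> k\<^sup>2"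
    using rates_pos by (simp_all add: field_simps mult_le_cancel_left_pos)
  then have "\<bar>x - us\<bar> \<le> k * (k + 2 * sqrt us)" "\<bar>y - vs\<bar> \<le> k * (k + 2 * sqrt vs)"
    "\<bar>z - ws\<bar> \<le> k * (k + 2 * sqrt ws)"
    using pos equilibrium_pos \<open>0 \<le> k\<close> by (simp_all add: volterra_le_imp_abs_diff_le)
  then show ?thesis
    using dist3_le_sum_abs[of x y z us vs ws] by (simp add: algebra_simps)
qed

lemma dist3_le_imp_lyapunov_le:
  assumes "dist3 x y z us vs ws \<le> d" "d \<le> min us (min vs ws) / 2"
  shows "lyapunov x y z \<le> (2 / us + a12 / a21 * (2 / vs) + a13 / a31 * (2 / ws)) * d\<^sup>2"
proof -
  have "\<bar>x - us\<bar> \<le> d" "\<bar>y - vs\<bar> \<le> d" "\<bar>z - ws\<bar> \<le> d"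
    using abs_le_dist3[where x = x and y = y and z = z and x' = us and y' = vs and z' = ws] assms(1)
    by linarith+
  then have "volterra us x \<le> 2 * d\<^sup>2 / us" "volterra vs y \<le> 2 * d\<^sup>2 / vs"
    "volterra ws z \<le> 2 * d\<^sup>2 / ws"
    using assms(2) equilibrium_pos by (auto intro!: abs_diff_le_imp_volterra_le)
  then have "lyapunov x y z \<le> 2 * d\<^sup>2 / us + a12 / a21 * (2 * d\<^sup>2 / vs) + a13 / a31 * (2 * d\<^sup>2 / ws)"
    unfolding lyapunov_def using rates_pos by (intro add_mono mult_left_mono) auto
  then show ?thesis by (simp add: algebra_simps)
qed

lemma lyapunov_small_near_equilibrium:
  assumes "0 < \<kappa>"
  shows "\<exists>\<delta>>0. \<forall>x y z. dist3 x y z us vs ws < \<delta> \<longrightarrow> lyapunov x y z \<le> \<kappa>"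
proof -
  define A where "A = 2 / us + a12 / a21 * (2 / vs) + a13 / a31 * (2 / ws)"
  have "0 < A" using equilibrium_pos rates_pos by (simp add: A_def add_pos_pos)
  define \<delta> where "\<delta> = min (min us (min vs ws) / 2) (sqrt (\<kappa> / A))"
  have "0 < \<delta>" using equilibrium_pos \<open>0 < A\<close> assms by (simp add: \<delta>_def)
  have "A * \<delta>\<^sup>2 \<le> A * (sqrt (\<kappa> / A))\<^sup>2"
    using \<open>0 < A\<close> \<open>0 < \<delta>\<close> by (intro mult_left_mono power_mono) (auto simp: \<delta>_def)
  also have "\<dots> = \<kappa>" using \<open>0 < A\<close> assms by simp
  finally have "A * \<delta>\<^sup>2 \<le> \<kappa>" .
  moreover have "\<delta> \<le> min us (min vs ws) / 2" unfolding \<delta>_def by (rule min.cobounded1)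
  then have "lyapunov x y z \<le> A * \<delta>\<^sup>2" if "dist3 x y z us vs ws < \<delta>" for x y z
    using dist3_le_imp_lyapunov_le[OF less_imp_le[OF that]] unfolding A_def by simp
  ultimately show ?thesis using \<open>0 < \<delta>\<close> by force
qed

lemma lyapunov_small_imp_near_equilibrium:
  assumes "0 < \<epsilon>"
  shows "\<exists>\<kappa>>0. \<forall>x y z. 0 < x \<and> 0 < y \<and> 0 < z \<and> lyapunov x y z \<le> \<kappa> \<longrightarrow>
    dist3 x y z us vs ws < \<epsilon>"
proof -
  define S where "S = sqrt us + sqrt vs + sqrt ws"
  have "0 \<le> S" using equilibrium_pos by (simp add: S_def)
  define k where "k = min 1 (\<epsilon> / (2 * (3 + 2 * S)))"
  have k: "0 < k" "k \<le> 1" "k \<le> \<epsilon> / (2 * (3 + 2 * S))"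
    using assms \<open>0 \<le> S\<close> by (auto simp: k_def)
  define \<kappa> where "\<kappa> = min_weight * k\<^sup>2"
  have "0 < \<kappa>" using min_weight_pos k by (simp add: \<kappa>_def)
  have "k * (3 * k + 2 * S) \<le> k * (3 + 2 * S)"
    using k by (intro mult_left_mono) auto
  also have "\<dots> \<le> \<epsilon> / 2"
    using k \<open>0 \<le> S\<close> by (simp add: field_simps)
  finally have "k * (3 * k + 2 * S) < \<epsilon>" using assms by linarith
  moreover have "dist3 x y z us vs ws \<le> k * (3 * k + 2 * S)"
    if "0 < x" "0 < y" "0 < z" "lyapunov x y z \<le> \<kappa>" for x y z
    using lyapunov_le_imp_dist3_le[OF that(1-3) less_imp_le[OF \<open>0 < k\<close>]] that(4)
    unfolding \<kappa>_def S_def by simp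
  ultimately show ?thesis using \<open>0 < \<kappa>\<close> by force
qed

end

section \<open>Solutions in the positive orthant\<close>

locale positive_solution = positive_equilibrium +
  fixes u v w :: "real \<Rightarrow> real"
  assumes solution: "is_solution r1 r2 mu a12 a13 a21 a31 u v w"
    and initial_pos: "0 < u 0" "0 < v 0" "0 < w 0"
begin

definition rate_u :: "real \<Rightarrow> real" where
  "rate_u t = - r1 * (u t - us) - a12 * (v t - vs) - a13 * (w t - ws)"

definition rate_v :: "real \<Rightarrow> real" where
  "rate_v t = a21 * (u t - us) - r2 * (v t - vs)"

definition rate_w :: "real \<Rightarrow> real" where
  "rate_w t = a31 * (u t - us)"

lemma has_real_derivative_solution:
  assumes "0 \<le> t"
  shows "(u has_real_derivative u t * rate_u t) (at t within {0..})"
    and "(v has_real_derivative v t * rate_v t) (at t within {0..})"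
    and "(w has_real_derivative w t * rate_w t) (at t within {0..})"
proof -
  have "(u has_real_derivative r1 * u t * (1 - u t) - a12 * u t * v t - a13 * u t * w t)
      (at t within {0..})"
    and "(v has_real_derivative r2 * v t * (1 - v t) + a21 * u t * v t) (at t within {0..})"
    and "(w has_real_derivative - mu * w t + a31 * u t * w t) (at t within {0..})"
    using solution assms unfolding is_solution_def by blast+
  moreover have "r1 * u t * (1 - u t) - a12 * u t * v t - a13 * u t * w t
      = u t * rate_u t + u t * (r1 * (1 - us) - a12 * vs - a13 * ws)"
    and "r2 * v t * (1 - v t) + a21 * u t * v t
      = v t * rate_v t + v t * (r2 * (1 - vs) + a21 * us)"
    and "- mu * w t + a31 * u t * w t = w t * rate_w t + w t * (a31 * us - mu)"
    by (simp_all add: rate_u_def rate_v_def rate_w_def algebra_simps)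
  ultimately show "(u has_real_derivative u t * rate_u t) (at t within {0..})"
    and "(v has_real_derivative v t * rate_v t) (at t within {0..})"
    and "(w has_real_derivative w t * rate_w t) (at t within {0..})"
    using equilibrium by (simp_all only: mult_zero_right add_0_right diff_self)
qed

lemma solution_continuous: "continuous_on {0..} u" "continuous_on {0..} v" "continuous_on {0..} w"
  by (rule has_real_derivative_imp_continuous_on, rule has_real_derivative_solution, simp)+

lemma rates_continuous:
  "continuous_on {0..} rate_u" "continuous_on {0..} rate_v" "continuous_on {0..} rate_w"
  unfolding rate_u_def rate_v_def rate_w_def
  by (intro continuous_intros solution_continuous)+

lemma solution_pos:
  assumes "0 \<le> t"
  shows "0 < u t" "0 < v t" "0 < w t"
  using DERIV_proportional_imp_pos[OF has_real_derivative_solution(1) rates_continuous(1) initial_pos(1) assms]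
    DERIV_proportional_imp_pos[OF has_real_derivative_solution(2) rates_continuous(2) initial_pos(2) assms]
    DERIV_proportional_imp_pos[OF has_real_derivative_solution(3) rates_continuous(3) initial_pos(3) assms]
  by blast+

definition V :: "real \<Rightarrow> real" where
  "V t = lyapunov (u t) (v t) (w t)"

definition dissipation :: "real \<Rightarrow> real" where
  "dissipation t = r1 * (u t - us)\<^sup>2 + a12 / a21 * r2 * (v t - vs)\<^sup>2"

lemma dissipation_nonneg: "0 \<le> dissipation t"
  using rates_pos by (simp add: dissipation_def)

lemma has_real_derivative_V:
  assumes "0 \<le> t"
  shows "(V has_real_derivative - dissipation t) (at t within {0..})"
proof -
  note pos = solution_pos[OF assms]
  have "(V has_real_derivative u t * rate_u t * (1 - us / u t)
      + a12 / a21 * (v t * rate_v t * (1 - vs / v t))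
      + a13 / a31 * (w t * rate_w t * (1 - ws / w t))) (at t within {0..})"
    unfolding V_def lyapunov_def using pos equilibrium_pos
    by (intro DERIV_add DERIV_cmult has_real_derivative_volterra has_real_derivative_solution assms)
  moreover have "u t * rate_u t * (1 - us / u t)
      + a12 / a21 * (v t * rate_v t * (1 - vs / v t))
      + a13 / a31 * (w t * rate_w t * (1 - ws / w t))
    = (u t - us) * rate_u t + a12 / a21 * ((v t - vs) * rate_v t)
      + a13 / a31 * ((w t - ws) * rate_w t)"
    using pos by (simp add: algebra_simps diff_divide_distrib)
  moreover have "\<dots> = - dissipation t"
    using rates_pos
    by (simp add: rate_u_def rate_v_def rate_w_def dissipation_def field_simps power2_eq_square)
  ultimately show ?thesis by simp
qed

lemma V_antitone: "0 \<le> s \<Longrightarrow> s \<le> t \<Longrightarrow> V t \<le> V s"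
  using dissipation_nonneg
  by (intro DERIV_nonpos_imp_antitone_atLeast[OF has_real_derivative_V]) auto

lemma V_nonneg: "0 \<le> t \<Longrightarrow> 0 \<le> V t"
  unfolding V_def using solution_pos by (intro lyapunov_nonneg)

lemma solution_bounded:
  obtains R where "0 \<le> R"
    and "\<And>t. 0 \<le> t \<Longrightarrow> \<bar>u t - us\<bar> \<le> R \<and> \<bar>v t - vs\<bar> \<le> R \<and> \<bar>w t - ws\<bar> \<le> R"
proof -
  define k where "k = sqrt (V 0 / min_weight)"
  have "0 \<le> k" using V_nonneg[of 0] min_weight_pos by (simp add: k_def)
  have "V 0 = min_weight * k\<^sup>2" using V_nonneg[of 0] min_weight_pos by (simp add: k_def)
  then have "lyapunov (u t) (v t) (w t) \<le> min_weight * k\<^sup>2" if "0 \<le> t" for t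
    using V_antitone[OF order_refl that] by (simp add: V_def)
  moreover define B where "B = k * (3 * k + 2 * (sqrt us + sqrt vs + sqrt ws))"
  ultimately have "dist3 (u t) (v t) (w t) us vs ws \<le> B" if "0 \<le> t" for t
    using lyapunov_le_imp_dist3_le[OF solution_pos[OF that] \<open>0 \<le> k\<close>] that by blast
  then have "\<bar>u t - us\<bar> \<le> B" "\<bar>v t - vs\<bar> \<le> B" "\<bar>w t - ws\<bar> \<le> B" if "0 \<le> t" for t
    using that abs_le_dist3[where x = "u t" and y = "v t" and z = "w t" and x' = us and y' = vs
        and z' = ws]
    by (meson order_trans)+
  moreover have "0 \<le> B" using \<open>0 \<le> k\<close> equilibrium_pos by (simp add: B_def)
  ultimately show ?thesis using that by blast
qed

lemma solution_lipschitz: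
  obtains L where "L-lipschitz_on {0..} u" "L-lipschitz_on {0..} v" "L-lipschitz_on {0..} w"
proof -
  obtain R where "0 \<le> R"
    and close: "\<And>t. 0 \<le> t \<Longrightarrow> \<bar>u t - us\<bar> \<le> R \<and> \<bar>v t - vs\<bar> \<le> R \<and> \<bar>w t - ws\<bar> \<le> R"
    using solution_bounded by blast
  define C where "C = us + vs + ws + R"
  define G where "G = (r1 + r2 + a12 + a13 + a21 + a31) * R"
  have "0 \<le> C * G" using equilibrium_pos rates_pos \<open>0 \<le> R\<close> by (simp add: C_def G_def)
  have "\<bar>u t * rate_u t\<bar> \<le> C * G" "\<bar>v t * rate_v t\<bar> \<le> C * G" "\<bar>w t * rate_w t\<bar> \<le> C * G"
    if "0 \<le> t" for t
  proof -
    note close = close[OF that, THEN conjunct1] close[OF that, THEN conjunct2, THEN conjunct1]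
      close[OF that, THEN conjunct2, THEN conjunct2]
    have "(\<bar>- r1\<bar> + \<bar>- a12\<bar> + \<bar>- a13\<bar>) * R \<le> G" "(\<bar>a21\<bar> + \<bar>- r2\<bar> + \<bar>0\<bar>) * R \<le> G"
      "(\<bar>a31\<bar> + \<bar>0\<bar> + \<bar>0\<bar>) * R \<le> G"
      using rates_pos \<open>0 \<le> R\<close> unfolding G_def by (intro mult_right_mono; simp)+
    then have "\<bar>rate_u t\<bar> \<le> G" "\<bar>rate_v t\<bar> \<le> G" "\<bar>rate_w t\<bar> \<le> G"
      using abs_linear_combination3_le[OF close, where a = "- r1" and b = "- a12" and c = "- a13"]
        abs_linear_combination3_le[OF close, where a = a21 and b = "- r2" and c = 0]
        abs_linear_combination3_le[OF close, where a = a31 and b = 0 and c = 0]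
      unfolding rate_u_def rate_v_def rate_w_def by simp_all
    moreover have "\<bar>u t\<bar> \<le> C" "\<bar>v t\<bar> \<le> C" "\<bar>w t\<bar> \<le> C"
      using close solution_pos[OF that] equilibrium_pos \<open>0 \<le> R\<close> by (auto simp: C_def)
    ultimately show "\<bar>u t * rate_u t\<bar> \<le> C * G" "\<bar>v t * rate_v t\<bar> \<le> C * G"
      "\<bar>w t * rate_w t\<bar> \<le> C * G"
      by (simp_all add: abs_mult mult_mono)
  qed
  with \<open>0 \<le> C * G\<close> show ?thesis
    by (intro that bounded_DERIV_imp_lipschitz_on[OF convex_real_interval(1)])
      (auto intro: has_real_derivative_solution)
qed

lemma dissipation_uniformly_continuous: "uniformly_continuous_on {0..} dissipation"
proof -
  obtain L where L: "L-lipschitz_on {0..} u" "L-lipschitz_on {0..} v"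
    using solution_lipschitz by blast
  obtain R where "0 \<le> R"
    and bounds: "\<And>t. 0 \<le> t \<Longrightarrow> \<bar>u t - us\<bar> \<le> R \<and> \<bar>v t - vs\<bar> \<le> R \<and> \<bar>w t - ws\<bar> \<le> R"
    using solution_bounded by blast
  have close: "\<bar>u t - us\<bar> \<le> R" "\<bar>v t - vs\<bar> \<le> R" if "t \<in> {0..}" for t
    using bounds[of t] that by auto
  have "(L + 0)-lipschitz_on {0..} (\<lambda>t. u t - us)" "(L + 0)-lipschitz_on {0..} (\<lambda>t. v t - vs)"
    by (intro lipschitz_on_diff L lipschitz_on_constant)+
  note squares = lipschitz_on_power2[OF this(1) close(1) \<open>0 \<le> R\<close>]
    lipschitz_on_power2[OF this(2) close(2) \<open>0 \<le> R\<close>]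
  from squares have "(r1 * (2 * R * (L + 0)) + a12 / a21 * r2 * (2 * R * (L + 0)))-lipschitz_on {0..}
      dissipation"
    unfolding dissipation_def using rates_pos
    by (intro lipschitz_on_add lipschitz_on_cmult_real_nonneg) auto
  then show ?thesis by (rule lipschitz_on_uniformly_continuous)
qed

lemma dissipation_tendsto_0: "(dissipation \<longlongrightarrow> 0) at_top"
proof -
  have V_lim: "(V \<longlongrightarrow> Inf (V ` {0..})) at_top"
    using V_antitone V_nonneg by (rule antitone_atLeast_imp_tendsto_Inf)
  have V_deriv: "(V has_real_derivative 0 + - dissipation t) (at t)" if "0 < t" for t
    using has_real_derivative_within_atLeast_imp_at[OF has_real_derivative_V] that by simp
  have "((\<lambda>t. - dissipation t) \<longlongrightarrow> 0) at_top"
    using dissipation_uniformly_continuous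
    by (intro Barbalat_lemma[OF V_lim V_deriv tendsto_const] uniformly_continuous_on_minus)
  then show ?thesis
    using tendsto_minus by force
qed

lemma solution_tendsto_u_v: "(u \<longlongrightarrow> us) at_top" "(v \<longlongrightarrow> vs) at_top"
proof -
  have lim: "((\<lambda>t. dissipation t / r1) \<longlongrightarrow> 0) at_top"
    "((\<lambda>t. dissipation t / (a12 / a21 * r2)) \<longlongrightarrow> 0) at_top"
    by (rule tendsto_divide_zero[OF dissipation_tendsto_0])+
  have bound: "(u t - us)\<^sup>2 * r1 \<le> dissipation t" "(v t - vs)\<^sup>2 * (a12 / a21 * r2) \<le> dissipation t"
    for t
    using rates_pos by (simp_all add: dissipation_def mult_ac)
  have ub: "(u t - us)\<^sup>2 \<le> dissipation t / r1" "(v t - vs)\<^sup>2 \<le> dissipation t / (a12 / a21 * r2)"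
    for t
    using rates_pos
    by (intro mult_imp_le_div_pos[OF _ bound(1)] mult_imp_le_div_pos[OF _ bound(2)]; simp)+
  have "((\<lambda>t. (u t - us)\<^sup>2) \<longlongrightarrow> 0) at_top"
    by (rule tendsto_sandwich[OF _ _ tendsto_const lim(1)]; intro always_eventually allI ub zero_le_power2)
  then show "(u \<longlongrightarrow> us) at_top" by (rule square_diff_tendsto_0_imp_tendsto)
  have "((\<lambda>t. (v t - vs)\<^sup>2) \<longlongrightarrow> 0) at_top"
    by (rule tendsto_sandwich[OF _ _ tendsto_const lim(2)]; intro always_eventually allI ub zero_le_power2)
  then show "(v \<longlongrightarrow> vs) at_top" by (rule square_diff_tendsto_0_imp_tendsto)
qed

lemma solution_tendsto_w: "(w \<longlongrightarrow> ws) at_top"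
proof -
  obtain L where "L-lipschitz_on {0..} w"
    using solution_lipschitz by blast
  then have "(\<bar>- a13\<bar> * (L + 0))-lipschitz_on {0..} (\<lambda>t. - a13 * (w t - ws))"
    by (intro lipschitz_on_cmult_real lipschitz_on_diff lipschitz_on_constant)
  then have ucont: "uniformly_continuous_on {0..} (\<lambda>t. - a13 * (w t - ws))"
    by (rule lipschitz_on_uniformly_continuous)
  have ln_lim: "((\<lambda>t. ln (u t)) \<longlongrightarrow> ln us) at_top"
    using solution_tendsto_u_v(1) equilibrium_pos(1) by (intro tendsto_ln) auto
  have "((\<lambda>t. - r1 * (u t - us) - a12 * (v t - vs)) \<longlongrightarrow> - r1 * (us - us) - a12 * (vs - vs)) at_top"
    by (intro tendsto_intros solution_tendsto_u_v)
  then have p_lim: "((\<lambda>t. - r1 * (u t - us) - a12 * (v t - vs)) \<longlongrightarrow> 0) at_top"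
    by simp
  have ln_deriv: "((\<lambda>t. ln (u t)) has_real_derivative
      (- r1 * (u t - us) - a12 * (v t - vs)) + - a13 * (w t - ws)) (at t)" if "0 < t" for t
  proof -
    have "(u has_real_derivative u t * rate_u t) (at t)"
      using has_real_derivative_solution(1)[of t] that
      by (intro has_real_derivative_within_atLeast_imp_at) auto
    then have "((\<lambda>t. ln (u t)) has_real_derivative 1 / u t * (u t * rate_u t)) (at t)"
      using solution_pos(1)[of t] that by (intro DERIV_chain2[OF DERIV_ln_divide]) auto
    then show ?thesis
      using solution_pos(1)[of t] that by (simp add: rate_u_def algebra_simps)
  qed
  have "((\<lambda>t. - a13 * (w t - ws)) \<longlongrightarrow> 0) at_top"
    by (rule Barbalat_lemma[OF ln_lim ln_deriv p_lim ucont])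
  then have "((\<lambda>t. - a13 * (w t - ws)) \<longlongrightarrow> - a13 * 0) at_top" by simp
  then have "((\<lambda>t. w t - ws) \<longlongrightarrow> 0) at_top"
    using rates_pos by (subst (asm) tendsto_mult_left_iff) auto
  then show ?thesis by (simp add: LIM_zero_iff)
qed

end

context positive_equilibrium
begin

lemma lyapunov_stable:
  assumes "0 < \<epsilon>"
  shows "\<exists>\<delta>>0. \<forall>u v w.
    is_solution r1 r2 mu a12 a13 a21 a31 u v w \<and> 0 < u 0 \<and> 0 < v 0 \<and> 0 < w 0 \<and>
    dist3 (u 0) (v 0) (w 0) us vs ws < \<delta> \<longrightarrow>
    (\<forall>t\<ge>0. dist3 (u t) (v t) (w t) us vs ws < \<epsilon>)"
proof -
  obtain \<kappa> where "0 < \<kappa>" and near: "\<And>x y z. 0 < x \<and> 0 < y \<and> 0 < z \<and> lyapunov x y z \<le> \<kappa> \<Longrightarrow>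
      dist3 x y z us vs ws < \<epsilon>"
    using lyapunov_small_imp_near_equilibrium[OF assms] by blast
  obtain \<delta> where "0 < \<delta>" and small: "\<And>x y z. dist3 x y z us vs ws < \<delta> \<Longrightarrow> lyapunov x y z \<le> \<kappa>"
    using lyapunov_small_near_equilibrium[OF \<open>0 < \<kappa>\<close>] by blast
  show ?thesis
  proof (intro exI[of _ \<delta>] conjI allI impI \<open>0 < \<delta>\<close>)
    fix u v w :: "real \<Rightarrow> real" and t :: real
    assume sol: "is_solution r1 r2 mu a12 a13 a21 a31 u v w \<and> 0 < u 0 \<and> 0 < v 0 \<and> 0 < w 0 \<and>
      dist3 (u 0) (v 0) (w 0) us vs ws < \<delta>" and "0 \<le> t"
    interpret positive_solution r1 r2 mu a12 a13 a21 a31 us vs ws u v w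
      using sol by unfold_locales auto
    have "V t \<le> V 0" using V_antitone \<open>0 \<le> t\<close> by simp
    also have "V 0 \<le> \<kappa>" using small sol by (simp add: V_def)
    finally show "dist3 (u t) (v t) (w t) us vs ws < \<epsilon>"
      using near solution_pos[OF \<open>0 \<le> t\<close>] by (simp add: V_def)
  qed
qed

lemma globally_attractive:
  assumes "is_solution r1 r2 mu a12 a13 a21 a31 u v w" "0 < u 0" "0 < v 0" "0 < w 0"
  shows "(u \<longlongrightarrow> us) at_top \<and> (v \<longlongrightarrow> vs) at_top \<and> (w \<longlongrightarrow> ws) at_top"
proof -
  interpret positive_solution r1 r2 mu a12 a13 a21 a31 us vs ws u v w
    using assms by unfold_locales
  show ?thesis using solution_tendsto_u_v solution_tendsto_w by blast
qed

end

theorem theorem2: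
  fixes r1 r2 mu a12 a13 a21 a31 :: real
  assumes pos: "r1 > 0" "r2 > 0" "mu > 0" "a12 > 0" "a13 > 0" "a21 > 0" "a31 > 0"
    and cond: "r1 * r2 * a31 - r1 * r2 * mu - a12 * a31 * r2 - a12 * a21 * mu > 0"
  defines "us \<equiv> mu / a31"
    and "vs \<equiv> 1 + a21 * mu / (a31 * r2)"
    and "ws \<equiv> (r1 * r2 * a31 - r1 * r2 * mu - a12 * a31 * r2 - a12 * a21 * mu) / (a13 * a31 * r2)"
  shows
    \<comment> \<open>E_* is a positive equilibrium\<close>
    "us > 0 \<and> vs > 0 \<and> ws > 0 \<and>
     r1 * us * (1 - us) - a12 * us * vs - a13 * us * ws = 0 \<and>
     r2 * vs * (1 - vs) + a21 * us * vs = 0 \<and>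
     - mu * ws + a31 * us * ws = 0 \<and>
     \<comment> \<open>Lyapunov stability (for solutions in the positive orthant)\<close>
     (\<forall>\<epsilon>>0. \<exists>\<delta>>0. \<forall>u v w.
        is_solution r1 r2 mu a12 a13 a21 a31 u v w \<and> u 0 > 0 \<and> v 0 > 0 \<and> w 0 > 0 \<and>
        dist3 (u 0) (v 0) (w 0) us vs ws < \<delta> \<longrightarrow>
        (\<forall>t\<ge>0. dist3 (u t) (v t) (w t) us vs ws < \<epsilon>)) \<and>
     \<comment> \<open>global attractivity in the positive orthant\<close>
     (\<forall>u v w.
        is_solution r1 r2 mu a12 a13 a21 a31 u v w \<and> u 0 > 0 \<and> v 0 > 0 \<and> w 0 > 0 \<longrightarrow>
        (u \<longlongrightarrow> us) at_top \<and> (v \<longlongrightarrow> vs) at_top \<and> (w \<longlongrightarrow> ws) at_top)"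
proof -
  interpret positive_equilibrium r1 r2 mu a12 a13 a21 a31 us vs ws
  proof
    show "0 < us" "0 < vs" "0 < ws"
      using pos cond by (simp_all add: us_def vs_def ws_def add_pos_pos)
    show "r1 * (1 - us) - a12 * vs - a13 * ws = 0" "r2 * (1 - vs) + a21 * us = 0" "a31 * us = mu"
      using pos by (simp_all add: us_def vs_def ws_def field_simps)
  qed (use pos in auto)
  show ?thesis
    using equilibrium_pos equilibrium_of_system lyapunov_stable globally_attractive by blast
qed

end
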